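(* Let $R$ be an arithmetic ring of Krull dimension $0$. Then $R$ is a Kaplansky ring and an adequate ring.
   Context: All rings are commutative with identity. $R$ is arithmetic if $R_M$ is a valuation ring (ideals totally ordered by inclusion) for every maximal ideal $M$. $R$ is Bézout if every finitely generated ideal is principal. $R$ is a Kaplansky ring (elementary divisor ring) if for every matrix $A$ over $R$ there exist invertible matrices $P,Q$ and a diagonal matrix $D$ over $R$ such that $PAQ=D$. $R$ is adequate if it is Bézout and for every $a,b\in R$ with $a\neq 0$ there exist $r,s\in R$ with $a=rs$, $Rr+Rb=R$, and $Rs'+Rb\neq R$ for every nonunit $s'$ dividing $s$. *)

theory Defs
  imports "Jordan_Normal_Form.Matrix"
begin

definition ring_ideal :: "'a::comm_ring_1 set \<Rightarrow> bool" where
  "ring_ideal I \<longleftrightarrow> 0 \<in> I \<and> (\<forall>x\<in>I. \<forall>y\<in>I. x + y \<in> I) \<and> (\<forall>r. \<forall>x\<in>I. r * x \<in> I)"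

definition prime_ideal :: "'a::comm_ring_1 set \<Rightarrow> bool" where
  "prime_ideal P \<longleftrightarrow> ring_ideal P \<and> P \<noteq> UNIV \<and> (\<forall>a b. a * b \<in> P \<longrightarrow> a \<in> P \<or> b \<in> P)"

definition maximal_ideal :: "'a::comm_ring_1 set \<Rightarrow> bool" where
  "maximal_ideal M \<longleftrightarrow> ring_ideal M \<and> M \<noteq> UNIV \<and>
     (\<forall>J. ring_ideal J \<and> M \<subseteq> J \<longrightarrow> J = M \<or> J = UNIV)"

text \<open>Krull dimension 0: there is a prime ideal (ring is nonzero) and
  every chain of primes has length 0, i.e. every prime ideal is maximal.\<close>
definition krull_dim_zero :: "'a::comm_ring_1 itself \<Rightarrow> bool" where
  "krull_dim_zero TYPE('a) \<longleftrightarrow> (\<exists>P::'a set. prime_ideal P) \<and>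
     (\<forall>P::'a set. prime_ideal P \<longrightarrow> maximal_ideal P)"

definition loc_rel :: "'a::comm_ring_1 set \<Rightarrow> (('a \<times> 'a) \<times> ('a \<times> 'a)) set" where
  "loc_rel M = {((a, s), (b, t)). s \<notin> M \<and> t \<notin> M \<and> (\<exists>u. u \<notin> M \<and> u * (a * t - b * s) = 0)}"

definition loc_carrier :: "'a::comm_ring_1 set \<Rightarrow> ('a \<times> 'a) set set" where
  "loc_carrier M = (UNIV \<times> (- M)) // loc_rel M"

definition loc_zero :: "'a::comm_ring_1 set \<Rightarrow> ('a \<times> 'a) set" where
  "loc_zero M = loc_rel M `` {(0, 1)}"

definition loc_add :: "'a::comm_ring_1 set \<Rightarrow> ('a \<times> 'a) set \<Rightarrow> ('a \<times> 'a) set \<Rightarrow> ('a \<times> 'a) set" where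
  "loc_add M X Y = loc_rel M `` {(a * t + b * s, s * t) | a s b t. (a, s) \<in> X \<and> (b, t) \<in> Y}"

definition loc_mult :: "'a::comm_ring_1 set \<Rightarrow> ('a \<times> 'a) set \<Rightarrow> ('a \<times> 'a) set \<Rightarrow> ('a \<times> 'a) set" where
  "loc_mult M X Y = loc_rel M `` {(a * b, s * t) | a s b t. (a, s) \<in> X \<and> (b, t) \<in> Y}"

definition loc_ideal :: "'a::comm_ring_1 set \<Rightarrow> ('a \<times> 'a) set set \<Rightarrow> bool" where
  "loc_ideal M I \<longleftrightarrow> I \<subseteq> loc_carrier M \<and> loc_zero M \<in> I \<and>
     (\<forall>X\<in>I. \<forall>Y\<in>I. loc_add M X Y \<in> I) \<and>
     (\<forall>X\<in>loc_carrier M. \<forall>Y\<in>I. loc_mult M X Y \<in> I)"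

definition loc_valuation :: "'a::comm_ring_1 set \<Rightarrow> bool" where
  "loc_valuation M \<longleftrightarrow> (\<forall>I J. loc_ideal M I \<and> loc_ideal M J \<longrightarrow> I \<subseteq> J \<or> J \<subseteq> I)"

definition arithmetic_ring :: "'a::comm_ring_1 itself \<Rightarrow> bool" where
  "arithmetic_ring TYPE('a) \<longleftrightarrow> (\<forall>M::'a set. maximal_ideal M \<longrightarrow> loc_valuation M)"

definition ideal_generated :: "'a::comm_ring_1 set \<Rightarrow> 'a set" where
  "ideal_generated S = \<Inter>{I. ring_ideal I \<and> S \<subseteq> I}"

definition bezout_ring :: "'a::comm_ring_1 itself \<Rightarrow> bool" where
  "bezout_ring TYPE('a) \<longleftrightarrow>
     (\<forall>S::'a set. finite S \<longrightarrow> (\<exists>a. ideal_generated S = {r * a | r. True}))"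

definition diagonal_rect :: "'a::zero mat \<Rightarrow> bool" where
  "diagonal_rect D \<longleftrightarrow> (\<forall>i j. i < dim_row D \<longrightarrow> j < dim_col D \<longrightarrow> i \<noteq> j \<longrightarrow> D $$ (i, j) = 0)"

definition kaplansky_ring :: "'a::comm_ring_1 itself \<Rightarrow> bool" where
  "kaplansky_ring TYPE('a) \<longleftrightarrow>
     (\<forall>m n (A::'a mat). A \<in> carrier_mat m n \<longrightarrow>
        (\<exists>P Q D. P \<in> carrier_mat m m \<and> Q \<in> carrier_mat n n \<and> invertible_mat P \<and> invertible_mat Q
           \<and> D \<in> carrier_mat m n \<and> diagonal_rect D \<and> P * A * Q = D))"

definition adequate_ring :: "'a::comm_ring_1 itself \<Rightarrow> bool" where
  "adequate_ring TYPE('a) \<longleftrightarrow> bezout_ring TYPE('a) \<and>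
     (\<forall>a b :: 'a. a \<noteq> 0 \<longrightarrow>
        (\<exists>r s. a = r * s \<and> {x * r + y * b | x y. True} = UNIV \<and>
           (\<forall>s'. s' dvd s \<and> \<not> s' dvd 1 \<longrightarrow> {x * s' + y * b | x y. True} \<noteq> UNIV)))"

end

theory Submission
  imports Defs "Jordan_Normal_Form.Determinant"
begin

(* In a ring of Krull dimension 0 every prime is maximal, which makes the ring strongly
   pi-regular: for each u some u^k lies in u^(k+1) R, and u^k x^k is then an idempotent f
   with u | f and (1 - f) u nilpotent.  Arithmeticity says that at every maximal ideal one of
   a, b divides the other up to a unit, so no maximal ideal contains the colon ideals
   (b : a) + (a : b); hence u + v = 1 with b | u a and a | v b, and the idempotent attached
   to u globalizes this: there is an idempotent e with b | e a and a | (1 - e) b.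
   Splitting along e, the element e b + (1 - e) a generates (a, b).  This gives the Bezout
   property and, mixing transformations on eR and (1 - e)R, a pivot dividing every entry of
   a matrix; clearing its row and column and recursing diagonalizes.  For adequacy, take the
   idempotent f of b: b is a unit on fR and nilpotent on (1 - f)R, and
   a = (f a + 1 - f) (f + (1 - f) a) is the required factorization. *)

section \<open>Ideals and the separation lemma\<close>

lemma ring_idealD:
  assumes "ring_ideal I"
  shows "0 \<in> I" and "x \<in> I \<Longrightarrow> y \<in> I \<Longrightarrow> x + y \<in> I"
    and "x \<in> I \<Longrightarrow> r * x \<in> I" and "x \<in> I \<Longrightarrow> x * r \<in> I"
  using assms unfolding ring_ideal_def by (auto simp: mult.commute)

lemma prime_ideal_one_notin: "prime_ideal P \<Longrightarrow> 1 \<notin> P"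
  unfolding prime_ideal_def ring_ideal_def by (metis UNIV_eq_I mult.right_neutral)

lemma prime_ideal_mult_notin: "prime_ideal P \<Longrightarrow> s \<notin> P \<Longrightarrow> t \<notin> P \<Longrightarrow> s * t \<notin> P"
  unfolding prime_ideal_def by blast

definition ideal_extend :: "'a::comm_ring_1 set \<Rightarrow> 'a \<Rightarrow> 'a set" where
  "ideal_extend I a = {p + r * a | p r. p \<in> I}"

lemma ring_ideal_extend:
  assumes I: "ring_ideal I"
  shows "ring_ideal (ideal_extend I a)" and "I \<subseteq> ideal_extend I a" and "a \<in> ideal_extend I a"
proof -
  show "ring_ideal (ideal_extend I a)"
    unfolding ring_ideal_def ideal_extend_def
  proof (intro conjI ballI allI)
    show "0 \<in> {p + r * a |p r. p \<in> I}"
      using ring_idealD(1)[OF I] by (auto intro!: exI[of _ 0])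
  next
    fix x y assume "x \<in> {p + r * a |p r. p \<in> I}" "y \<in> {p + r * a |p r. p \<in> I}"
    then obtain p r p' r' where "x = p + r * a" "y = p' + r' * a" "p \<in> I" "p' \<in> I"
      by auto
    then show "x + y \<in> {p + r * a |p r. p \<in> I}"
      using ring_idealD(2)[OF I] by (intro CollectI exI[of _ "p + p'"] exI[of _ "r + r'"])
        (auto simp: algebra_simps)
  next
    fix s x assume "x \<in> {p + r * a |p r. p \<in> I}"
    then obtain p r where "x = p + r * a" "p \<in> I"
      by auto
    then show "s * x \<in> {p + r * a |p r. p \<in> I}"
      using ring_idealD(3)[OF I] by (intro CollectI exI[of _ "s * p"] exI[of _ "s * r"])
        (auto simp: algebra_simps)
  qed
  show "I \<subseteq> ideal_extend I a"
  proof
    fix x assume "x \<in> I"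
    then show "x \<in> ideal_extend I a"
      unfolding ideal_extend_def by (intro CollectI exI[of _ x] exI[of _ 0]) simp
  qed
  show "a \<in> ideal_extend I a"
    unfolding ideal_extend_def using ring_idealD(1)[OF I] by (intro CollectI exI[of _ 0] exI[of _ 1]) simp
qed

lemma maximal_ideal_inverse_mod:
  assumes M: "maximal_ideal M" and "a \<notin> M"
  obtains r where "1 - r * a \<in> M"
proof -
  have I: "ring_ideal M"
    using M unfolding maximal_ideal_def by blast
  have "ideal_extend M a = UNIV"
    using M ring_ideal_extend[OF I, of a] \<open>a \<notin> M\<close> unfolding maximal_ideal_def by blast
  then obtain p r where "1 = p + r * a" "p \<in> M"
    unfolding ideal_extend_def by blast
  then have "1 - r * a \<in> M"
    by (metis add_diff_cancel_right')
  then show thesis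
    using that by blast
qed

lemma ring_ideal_Union_chain:
  assumes "C \<noteq> {}" "\<forall>I\<in>C. ring_ideal I" "\<forall>I\<in>C. \<forall>J\<in>C. I \<subseteq> J \<or> J \<subseteq> I"
  shows "ring_ideal (\<Union>C)"
  unfolding ring_ideal_def
proof (intro conjI ballI allI)
  show "0 \<in> \<Union>C"
    using assms(1,2) ring_idealD(1) by blast
next
  fix x y assume "x \<in> \<Union>C" "y \<in> \<Union>C"
  then obtain I J where "I \<in> C" "J \<in> C" "x \<in> I" "y \<in> J"
    by blast
  with assms(2,3) show "x + y \<in> \<Union>C"
    by (metis UnionI ring_idealD(2) subsetD)
next
  fix r x assume "x \<in> \<Union>C"
  then show "r * x \<in> \<Union>C"
    using assms(2) ring_idealD(3) by blast
qed

text \<open>A maximal element (Zorn) among the ideals containing \<open>J\<close> and missing \<open>S\<close> is prime.\<close>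
lemma prime_ideal_separation:
  fixes J :: "'a::comm_ring_1 set"
  assumes J: "ring_ideal J" and S1: "1 \<in> S" and S_mult: "\<And>x y. x \<in> S \<Longrightarrow> y \<in> S \<Longrightarrow> x * y \<in> S"
    and JS: "J \<inter> S = {}"
  obtains P where "prime_ideal P" "J \<subseteq> P" "P \<inter> S = {}"
proof -
  define A where "A = {I. ring_ideal I \<and> J \<subseteq> I \<and> I \<inter> S = {}}"
  have "\<exists>U\<in>A. \<forall>X\<in>C. X \<subseteq> U" if "C \<in> chains A" for C
  proof (cases "C = {}")
    case True
    then show ?thesis
      using J JS unfolding A_def by auto
  next
    case False
    have "C \<subseteq> A" "\<forall>I\<in>C. \<forall>J\<in>C. I \<subseteq> J \<or> J \<subseteq> I"
      using that unfolding chains_def chain_subset_def by auto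
    with False have "\<Union>C \<in> A"
      using ring_ideal_Union_chain[of C] unfolding A_def by blast
    then show ?thesis
      by blast
  qed
  then obtain P where PA: "P \<in> A" and P_max: "\<forall>X\<in>A. P \<subseteq> X \<longrightarrow> X = P"
    using Zorn_Lemma2[of A] by blast
  have I: "ring_ideal P" and "J \<subseteq> P" and PS: "P \<inter> S = {}"
    using PA unfolding A_def by auto
  have meets_S: "\<exists>p r. p \<in> P \<and> p + r * a \<in> S" if "a \<notin> P" for a
  proof -
    have "ideal_extend P a \<notin> A"
      using P_max ring_ideal_extend[OF I, of a] that by blast
    then show ?thesis
      using ring_ideal_extend[OF I, of a] \<open>J \<subseteq> P\<close> unfolding A_def ideal_extend_def by auto
  qed
  have "a \<in> P \<or> b \<in> P" if ab: "a * b \<in> P" for a b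
  proof (rule ccontr)
    assume "\<not> (a \<in> P \<or> b \<in> P)"
    then obtain p r p' r' where pr: "p \<in> P" "p' \<in> P" "p + r * a \<in> S" "p' + r' * b \<in> S"
      using meets_S by metis
    have "(p + r * a) * (p' + r' * b) = p * (p' + r' * b) + p' * (r * a) + (r * r') * (a * b)"
      by (simp add: algebra_simps)
    also have "\<dots> \<in> P"
      using ring_idealD[OF I] pr ab by metis
    finally show False
      using S_mult pr PS by blast
  qed
  moreover have "P \<noteq> UNIV"
    using PS S1 by auto
  ultimately show thesis
    using that I \<open>J \<subseteq> P\<close> PS unfolding prime_ideal_def by blast
qed

section \<open>Comparability in a valuation localization\<close>

lemma loc_rel_iff:
  "((a, s), (b, t)) \<in> loc_rel M \<longleftrightarrow> s \<notin> M \<and> t \<notin> M \<and> (\<exists>u. u \<notin> M \<and> u * (a * t - b * s) = 0)"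
  unfolding loc_rel_def by simp

lemma equiv_loc_rel:
  assumes M: "prime_ideal M"
  shows "equiv (UNIV \<times> - M) (loc_rel M)"
proof (rule equivI)
  show "loc_rel M \<subseteq> (UNIV \<times> - M) \<times> (UNIV \<times> - M)"
    unfolding loc_rel_def by auto
  show "refl_on (UNIV \<times> - M) (loc_rel M)"
    using prime_ideal_one_notin[OF M] by (auto simp: loc_rel_iff intro!: refl_onI exI[of _ 1])
  show "sym (loc_rel M)"
  proof (rule symI, clarify)
    fix a s b t assume "((a, s), (b, t)) \<in> loc_rel M"
    then obtain u where "s \<notin> M" "t \<notin> M" "u \<notin> M" "u * (a * t - b * s) = 0"
      by (auto simp: loc_rel_iff)
    moreover have "u * (b * s - a * t) = - (u * (a * t - b * s))"
      by (simp add: algebra_simps)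
    ultimately show "((b, t), (a, s)) \<in> loc_rel M"
      by (auto simp: loc_rel_iff)
  qed
  show "trans (loc_rel M)"
  proof (rule transI, clarify)
    fix a s b t c r
    assume "((a, s), (b, t)) \<in> loc_rel M" "((b, t), (c, r)) \<in> loc_rel M"
    then obtain u v where h: "s \<notin> M" "t \<notin> M" "r \<notin> M" "u \<notin> M" "v \<notin> M"
      "u * (a * t - b * s) = 0" "v * (b * r - c * t) = 0"
      by (auto simp: loc_rel_iff)
    have "(u * v * t) * (a * r - c * s) = (v * r) * (u * (a * t - b * s)) + (u * s) * (v * (b * r - c * t))"
      by (simp add: algebra_simps)
    then have "(u * v * t) * (a * r - c * s) = 0"
      using h by simp
    moreover have "u * v * t \<notin> M"
      using h prime_ideal_mult_notin[OF M] by blast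
    ultimately show "((a, s), (c, r)) \<in> loc_rel M"
      using h by (auto simp: loc_rel_iff)
  qed
qed

lemma loc_rel_add:
  assumes M: "prime_ideal M"
    and "((a, s), (a', s')) \<in> loc_rel M" "((b, t), (b', t')) \<in> loc_rel M"
  shows "((a * t + b * s, s * t), (a' * t' + b' * s', s' * t')) \<in> loc_rel M"
proof -
  obtain u v where h: "s \<notin> M" "s' \<notin> M" "t \<notin> M" "t' \<notin> M" "u \<notin> M" "v \<notin> M"
    "u * (a * s' - a' * s) = 0" "v * (b * t' - b' * t) = 0"
    using assms(2,3) by (auto simp: loc_rel_iff)
  have "(u * v) * ((a * t + b * s) * (s' * t') - (a' * t' + b' * s') * (s * t))
     = (v * t * t') * (u * (a * s' - a' * s)) + (u * s * s') * (v * (b * t' - b' * t))"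
    by (simp add: algebra_simps)
  then show ?thesis
    using h prime_ideal_mult_notin[OF M] by (auto simp: loc_rel_iff intro!: exI[of _ "u * v"])
qed

lemma loc_rel_mult:
  assumes M: "prime_ideal M"
    and "((a, s), (a', s')) \<in> loc_rel M" "((b, t), (b', t')) \<in> loc_rel M"
  shows "((a * b, s * t), (a' * b', s' * t')) \<in> loc_rel M"
proof -
  obtain u v where h: "s \<notin> M" "s' \<notin> M" "t \<notin> M" "t' \<notin> M" "u \<notin> M" "v \<notin> M"
    "u * (a * s' - a' * s) = 0" "v * (b * t' - b' * t) = 0"
    using assms(2,3) by (auto simp: loc_rel_iff)
  have "(u * v) * ((a * b) * (s' * t') - (a' * b') * (s * t))
     = (v * b * t') * (u * (a * s' - a' * s)) + (u * a' * s) * (v * (b * t' - b' * t))"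
    by (simp add: algebra_simps)
  then show ?thesis
    using h prime_ideal_mult_notin[OF M] by (auto simp: loc_rel_iff intro!: exI[of _ "u * v"])
qed

lemma Image_congruent_op:
  assumes E: "equiv A r" and "p \<in> A" "q \<in> A"
    and compat: "\<And>x x' y y'. (x, x') \<in> r \<Longrightarrow> (y, y') \<in> r \<Longrightarrow> (f x y, f x' y') \<in> r"
  shows "r `` {f x y | x y. x \<in> r `` {p} \<and> y \<in> r `` {q}} = r `` {f p q}"
proof -
  have "congruent2 r r (\<lambda>x y. r `` {f x y})"
    by (rule congruent2I') (use equiv_class_eq[OF E] compat in blast)
  then have "(\<Union>x\<in>r `` {p}. \<Union>y\<in>r `` {q}. r `` {f x y}) = r `` {f p q}"
    using UN_equiv_class2[OF E E] assms(2,3) by blast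
  moreover have "r `` {f x y | x y. x \<in> r `` {p} \<and> y \<in> r `` {q}} = (\<Union>x\<in>r `` {p}. \<Union>y\<in>r `` {q}. r `` {f x y})"
    by blast
  ultimately show ?thesis
    by simp
qed

lemma loc_add_class:
  assumes M: "prime_ideal M" and "s \<notin> M" "t \<notin> M"
  shows "loc_add M (loc_rel M `` {(a, s)}) (loc_rel M `` {(b, t)}) = loc_rel M `` {(a * t + b * s, s * t)}"
proof -
  define f :: "'a \<times> 'a \<Rightarrow> 'a \<times> 'a \<Rightarrow> 'a \<times> 'a" where "f = (\<lambda>(a, s) (b, t). (a * t + b * s, s * t))"
  have "{(a * t + b * s, s * t) | a s b t. (a, s) \<in> X \<and> (b, t) \<in> Y} = {f x y | x y. x \<in> X \<and> y \<in> Y}" for X Y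
    unfolding f_def by force
  moreover have "loc_rel M `` {f x y | x y. x \<in> loc_rel M `` {(a, s)} \<and> y \<in> loc_rel M `` {(b, t)}}
      = loc_rel M `` {f (a, s) (b, t)}"
    by (rule Image_congruent_op[OF equiv_loc_rel[OF M]], use assms in \<open>simp_all\<close>)
      (auto simp: f_def split_paired_all intro: loc_rel_add[OF M])
  ultimately show ?thesis
    unfolding loc_add_def f_def by simp
qed

lemma loc_mult_class:
  assumes M: "prime_ideal M" and "s \<notin> M" "t \<notin> M"
  shows "loc_mult M (loc_rel M `` {(a, s)}) (loc_rel M `` {(b, t)}) = loc_rel M `` {(a * b, s * t)}"
proof -
  define f :: "'a \<times> 'a \<Rightarrow> 'a \<times> 'a \<Rightarrow> 'a \<times> 'a" where "f = (\<lambda>(a, s) (b, t). (a * b, s * t))"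
  have "{(a * b, s * t) | a s b t. (a, s) \<in> X \<and> (b, t) \<in> Y} = {f x y | x y. x \<in> X \<and> y \<in> Y}" for X Y
    unfolding f_def by force
  moreover have "loc_rel M `` {f x y | x y. x \<in> loc_rel M `` {(a, s)} \<and> y \<in> loc_rel M `` {(b, t)}}
      = loc_rel M `` {f (a, s) (b, t)}"
    by (rule Image_congruent_op[OF equiv_loc_rel[OF M]], use assms in \<open>simp_all\<close>)
      (auto simp: f_def split_paired_all intro: loc_rel_mult[OF M])
  ultimately show ?thesis
    unfolding loc_mult_def f_def by simp
qed

text \<open>The principal ideal \<open>a R\<^sub>M\<close> of the localization.\<close>
definition loc_principal :: "'a::comm_ring_1 set \<Rightarrow> 'a \<Rightarrow> ('a \<times> 'a) set set" where
  "loc_principal M a = {X \<in> loc_carrier M. \<forall>(x, s) \<in> X. \<exists>u. u \<notin> M \<and> a dvd u * x}"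

lemma loc_class_in_principal_iff:
  assumes M: "prime_ideal M" and "s \<notin> M"
  shows "loc_rel M `` {(x, s)} \<in> loc_principal M a \<longleftrightarrow> (\<exists>u. u \<notin> M \<and> a dvd u * x)"
proof
  assume "loc_rel M `` {(x, s)} \<in> loc_principal M a"
  moreover have "(x, s) \<in> loc_rel M `` {(x, s)}"
    using prime_ideal_one_notin[OF M] \<open>s \<notin> M\<close> by (auto simp: loc_rel_iff)
  ultimately show "\<exists>u. u \<notin> M \<and> a dvd u * x"
    unfolding loc_principal_def by blast
next
  assume "\<exists>u. u \<notin> M \<and> a dvd u * x"
  then obtain u where u: "u \<notin> M" "a dvd u * x"
    by blast
  have "\<exists>u'. u' \<notin> M \<and> a dvd u' * x'" if rel: "((x, s), (x', s')) \<in> loc_rel M" for x' s'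
  proof -
    obtain v where v: "s' \<notin> M" "v \<notin> M" "v * (x * s' - x' * s) = 0"
      using rel by (auto simp: loc_rel_iff)
    then have "(u * v * s) * x' = (v * s') * (u * x)"
      by (simp add: algebra_simps)
    then have "a dvd (u * v * s) * x'"
      using u(2) by simp
    moreover have "u * v * s \<notin> M"
      using u v \<open>s \<notin> M\<close> prime_ideal_mult_notin[OF M] by blast
    ultimately show ?thesis
      by blast
  qed
  moreover have "loc_rel M `` {(x, s)} \<in> loc_carrier M"
    unfolding loc_carrier_def using \<open>s \<notin> M\<close> by (auto intro: quotientI)
  ultimately show "loc_rel M `` {(x, s)} \<in> loc_principal M a"
    unfolding loc_principal_def by auto
qed

lemma loc_principal_ideal:
  assumes M: "prime_ideal M"
  shows "loc_ideal M (loc_principal M a)"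
proof -
  have class_of: "\<exists>x s. s \<notin> M \<and> X = loc_rel M `` {(x, s)}" if "X \<in> loc_carrier M" for X
    using that unfolding loc_carrier_def by (auto elim!: quotientE)
  have one: "(1::'a) \<notin> M"
    using prime_ideal_one_notin[OF M] .
  have "loc_zero M \<in> loc_principal M a"
    unfolding loc_zero_def using loc_class_in_principal_iff[OF M one] one by auto
  moreover have "loc_add M X Y \<in> loc_principal M a"
    if XY: "X \<in> loc_principal M a" "Y \<in> loc_principal M a" for X Y
  proof -
    obtain x s y t where X: "s \<notin> M" "X = loc_rel M `` {(x, s)}" and Y: "t \<notin> M" "Y = loc_rel M `` {(y, t)}"
      using XY class_of unfolding loc_principal_def by blast
    obtain u v where "u \<notin> M" "a dvd u * x" "v \<notin> M" "a dvd v * y"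
      using XY loc_class_in_principal_iff[OF M] X Y by metis
    moreover have "(u * v) * (x * t + y * s) = (v * t) * (u * x) + (u * s) * (v * y)"
      by (simp add: algebra_simps)
    ultimately have "a dvd (u * v) * (x * t + y * s)" "u * v \<notin> M"
      using prime_ideal_mult_notin[OF M] by auto
    then show ?thesis
      unfolding X Y loc_add_class[OF M X(1) Y(1)]
      using loc_class_in_principal_iff[OF M] prime_ideal_mult_notin[OF M X(1) Y(1)] by blast
  qed
  moreover have "loc_mult M X Y \<in> loc_principal M a"
    if XY: "X \<in> loc_carrier M" "Y \<in> loc_principal M a" for X Y
  proof -
    obtain x s y t where X: "s \<notin> M" "X = loc_rel M `` {(x, s)}" and Y: "t \<notin> M" "Y = loc_rel M `` {(y, t)}"
      using XY class_of unfolding loc_principal_def by blast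
    obtain v where "v \<notin> M" "a dvd v * y"
      using XY loc_class_in_principal_iff[OF M] Y by metis
    then have "a dvd x * (v * y)"
      by (simp add: dvd_mult)
    then have "a dvd v * (x * y)"
      by (simp add: ac_simps)
    then show ?thesis
      unfolding X Y loc_mult_class[OF M X(1) Y(1)]
      using loc_class_in_principal_iff[OF M] prime_ideal_mult_notin[OF M X(1) Y(1)] \<open>v \<notin> M\<close> by blast
  qed
  moreover have "loc_principal M a \<subseteq> loc_carrier M"
    unfolding loc_principal_def by blast
  ultimately show ?thesis
    unfolding loc_ideal_def by blast
qed

lemma loc_valuation_comparable:
  assumes M: "prime_ideal M" and V: "loc_valuation M"
  shows "(\<exists>u. u \<notin> M \<and> b dvd u * a) \<or> (\<exists>u. u \<notin> M \<and> a dvd u * b)"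
proof -
  have one: "(1::'a) \<notin> M"
    using prime_ideal_one_notin[OF M] .
  have self: "loc_rel M `` {(x, 1)} \<in> loc_principal M x" for x
    using loc_class_in_principal_iff[OF M one] one by auto
  have "loc_principal M a \<subseteq> loc_principal M b \<or> loc_principal M b \<subseteq> loc_principal M a"
    using V loc_principal_ideal[OF M] unfolding loc_valuation_def by blast
  then show ?thesis
    using self[of a] self[of b] loc_class_in_principal_iff[OF M one] by blast
qed

section \<open>Zero-dimensional rings are strongly \<open>\<pi>\<close>-regular\<close>

definition strongly_pi_regular :: "'a::comm_ring_1 itself \<Rightarrow> bool" where
  "strongly_pi_regular TYPE('a) \<longleftrightarrow> (\<forall>u::'a. \<exists>k x. u ^ k = u ^ Suc k * x)"

text \<open>Otherwise the multiplicative set of all \<open>u\<^sup>k (1 - u y)\<close> misses \<open>0\<close>, so some prime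
  ideal avoids it; that prime is maximal and misses \<open>u\<close>, so it contains some \<open>1 - r u\<close>,
  which lies in the set.\<close>
lemma zero_dim_imp_strongly_pi_regular:
  assumes Z: "\<forall>P::'a::comm_ring_1 set. prime_ideal P \<longrightarrow> maximal_ideal P"
  shows "strongly_pi_regular TYPE('a)"
  unfolding strongly_pi_regular_def
proof (intro allI, rule ccontr)
  fix u :: 'a
  assume none: "\<not> (\<exists>k x. u ^ k = u ^ Suc k * x)"
  define S where "S = {u ^ k * (1 - u * y) | k y. True}"
  have one: "1 \<in> S"
    unfolding S_def by (intro CollectI exI[of _ 0]) simp
  have mult: "x * y \<in> S" if xy: "x \<in> S" "y \<in> S" for x y
  proof -
    obtain k y1 l y2 where x: "x = u ^ k * (1 - u * y1)" and y: "y = u ^ l * (1 - u * y2)"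
      using xy unfolding S_def by blast
    have "x * y = u ^ (k + l) * (1 - u * (y1 + y2 - u * y1 * y2))"
      unfolding x y power_add by (simp add: algebra_simps)
    then show ?thesis
      unfolding S_def by blast
  qed
  have "0 \<notin> S"
  proof
    assume "0 \<in> S"
    then obtain k y where "0 = u ^ k * (1 - u * y)"
      unfolding S_def by blast
    moreover have "u ^ k - u ^ Suc k * y = u ^ k * (1 - u * y)"
      by (simp add: right_diff_distrib ac_simps)
    ultimately have "u ^ k = u ^ Suc k * y"
      by simp
    with none show False
      by blast
  qed
  then have "{0} \<inter> S = {}"
    by blast
  moreover have "ring_ideal {0::'a}"
    unfolding ring_ideal_def by simp
  ultimately obtain P where P: "prime_ideal P" "P \<inter> S = {}"
    using prime_ideal_separation[OF _ one mult] by metis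
  have "u \<in> S"
    unfolding S_def by (intro CollectI exI[of _ 1] exI[of _ 0]) simp
  with P have "u \<notin> P"
    by blast
  moreover have "maximal_ideal P"
    using Z P(1) by blast
  ultimately obtain r where "1 - r * u \<in> P"
    using maximal_ideal_inverse_mod by blast
  moreover have "1 - r * u \<in> S"
    unfolding S_def by (intro CollectI exI[of _ 0] exI[of _ r]) (simp add: mult.commute)
  ultimately show False
    using P(2) by blast
qed

lemma pi_regular_idempotent:
  fixes u x :: "'a::comm_ring_1"
  assumes ux: "u ^ k = u ^ Suc k * x"
  defines "f \<equiv> u ^ k * x ^ k"
  shows "f * f = f" and "u dvd f" and "((1 - f) * u) ^ Suc k = 0"
proof -
  have shift: "u ^ (k + j) * x ^ j = u ^ k" for j
  proof (induction j)
    case (Suc j)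
    have "u ^ (k + Suc j) * x ^ Suc j = u ^ j * (u ^ Suc k * x) * x ^ j"
      by (simp add: power_add algebra_simps)
    also have "\<dots> = u ^ j * u ^ k * x ^ j"
      by (simp only: ux[symmetric])
    also have "\<dots> = u ^ (k + j) * x ^ j"
      by (simp add: power_add)
    finally show ?case
      using Suc.IH by simp
  qed simp
  have "f * f = (u ^ (k + k) * x ^ k) * x ^ k"
    unfolding f_def by (simp add: power_add algebra_simps)
  then show "f * f = f"
    unfolding shift f_def .
  have "u * (u ^ k * x ^ Suc k) = (u ^ (k + 1) * x ^ 1) * x ^ k"
    by (simp add: algebra_simps)
  then have "u * (u ^ k * x ^ Suc k) = f"
    unfolding shift f_def .
  then show "u dvd f"
    by (rule dvdI[OF sym])
  have "(1 - f) * u ^ k = u ^ k - u ^ (k + k) * x ^ k"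
    unfolding f_def by (simp add: power_add algebra_simps)
  then have "(1 - f) * u ^ k = 0"
    by (simp add: shift)
  moreover have "((1 - f) * u) ^ Suc k = (1 - f) ^ k * u * ((1 - f) * u ^ k)"
    by (simp only: power_mult_distrib power_Suc) (simp add: ac_simps)
  ultimately show "((1 - f) * u) ^ Suc k = 0"
    by simp
qed

lemma nilpotent_one_minus_dvd_one:
  fixes z :: "'a::comm_ring_1"
  assumes "z ^ n = 0"
  shows "(1 - z) dvd 1"
  using one_diff_power_eq[of z n] assms by (simp add: dvdI)

definition idempotent_comparable :: "'a::comm_ring_1 itself \<Rightarrow> bool" where
  "idempotent_comparable TYPE('a) \<longleftrightarrow> (\<forall>a b::'a. \<exists>e. e * e = e \<and> b dvd e * a \<and> a dvd (1 - e) * b)"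

text \<open>The ideal \<open>J\<close> below is the sum of the colon ideals \<open>(b : a)\<close> and \<open>(a : b)\<close>; it is not
  contained in any maximal ideal, because the localization there is a valuation ring.\<close>
lemma arithmetic_colon_partition_of_unity:
  fixes a b :: "'a::comm_ring_1"
  assumes AR: "arithmetic_ring TYPE('a)" and Z: "\<forall>P::'a set. prime_ideal P \<longrightarrow> maximal_ideal P"
  obtains u v where "u + v = 1" "b dvd u * a" "a dvd v * b"
proof -
  define J where "J = {u + v | u v. b dvd u * a \<and> a dvd v * b}"
  have "ring_ideal J"
    unfolding ring_ideal_def
  proof (intro conjI ballI allI)
    show "0 \<in> J"
      unfolding J_def by (intro CollectI exI[of _ 0]) simp
  next
    fix x y assume "x \<in> J" "y \<in> J"
    then obtain u v u' v' where "x = u + v" "y = u' + v'"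
      "b dvd u * a" "a dvd v * b" "b dvd u' * a" "a dvd v' * b"
      unfolding J_def by blast
    then have "x + y = (u + u') + (v + v')" "b dvd (u + u') * a" "a dvd (v + v') * b"
      by (simp_all add: distrib_right)
    then show "x + y \<in> J"
      unfolding J_def by blast
  next
    fix r x assume "x \<in> J"
    then obtain u v where "x = u + v" "b dvd u * a" "a dvd v * b"
      unfolding J_def by blast
    then have "r * x = r * u + r * v" "b dvd (r * u) * a" "a dvd (r * v) * b"
      by (simp_all add: distrib_left mult.assoc)
    then show "r * x \<in> J"
      unfolding J_def by blast
  qed
  have "1 \<in> J"
  proof (rule ccontr)
    assume "1 \<notin> J"
    then have "J \<inter> {1} = {}"
      by blast
    then obtain P where P: "prime_ideal P" "J \<subseteq> P"
      using prime_ideal_separation[OF \<open>ring_ideal J\<close>, of "{1}"] by auto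
    then have "loc_valuation P"
      using AR Z unfolding arithmetic_ring_def by blast
    then obtain w where w: "w \<notin> P" "b dvd w * a \<or> a dvd w * b"
      using loc_valuation_comparable[OF P(1)] by blast
    have "w \<in> J"
      using w(2)
    proof
      assume "b dvd w * a"
      then have "w + 0 \<in> J"
        unfolding J_def by (intro CollectI exI[of _ w] exI[of _ 0]) simp
      then show "w \<in> J"
        by simp
    next
      assume "a dvd w * b"
      then have "0 + w \<in> J"
        unfolding J_def by (intro CollectI exI[of _ 0] exI[of _ w]) simp
      then show "w \<in> J"
        by simp
    qed
    with P w(1) show False
      by blast
  qed
  then obtain u v where uv: "1 = u + v" "b dvd u * a" "a dvd v * b"
    unfolding J_def by blast
  show thesis
    using that[OF uv(1)[symmetric] uv(2,3)] .
qed

text \<open>The idempotent attached to \<open>u\<close> turns the partition of unity into a global splitting: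
  \<open>(1 - f) u\<close> is nilpotent, so \<open>1 - f\<close> and \<open>(1 - f) v\<close> differ by a unit.\<close>
lemma idempotent_comparable_if_arithmetic_zero_dim:
  assumes AR: "arithmetic_ring TYPE('a::comm_ring_1)"
    and Z: "\<forall>P::'a set. prime_ideal P \<longrightarrow> maximal_ideal P"
  shows "idempotent_comparable TYPE('a)"
  unfolding idempotent_comparable_def
proof (intro allI)
  fix a b :: 'a
  obtain u v where uv: "u + v = 1" "b dvd u * a" "a dvd v * b"
    using arithmetic_colon_partition_of_unity[OF AR Z] .
  obtain k x where "u ^ k = u ^ Suc k * x"
    using zero_dim_imp_strongly_pi_regular[OF Z] unfolding strongly_pi_regular_def by blast
  then obtain f where f: "f * f = f" "u dvd f" "((1 - f) * u) ^ Suc k = 0"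
    using pi_regular_idempotent by blast
  have "u * a dvd f * a"
    using f(2) by (rule mult_dvd_mono) simp
  with uv(2) have "b dvd f * a"
    by (rule dvd_trans)
  moreover have "a dvd (1 - f) * b"
  proof -
    have ff: "(1 - f) * (1 - f) = 1 - f"
      using f(1) by (simp add: algebra_simps)
    have "(1 - f) * (1 - (1 - f) * u) = (1 - f) - ((1 - f) * (1 - f)) * u"
      by (simp add: algebra_simps)
    also have "\<dots> = (1 - f) * (1 - u)"
      unfolding ff by (simp add: algebra_simps)
    also have "1 - u = v"
      using uv(1) by (metis add_diff_cancel_left')
    finally have "(1 - f) * (1 - (1 - f) * u) = (1 - f) * v" .
    then have "(1 - f) * b * (1 - (1 - f) * u) = (1 - f) * (v * b)"
      by (simp add: ac_simps)
    then have "a dvd (1 - f) * b * (1 - (1 - f) * u)"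
      using uv(3) by simp
    moreover have "(1 - f) * b * (1 - (1 - f) * u) dvd (1 - f) * b"
      using mult_dvd_mono[OF dvd_refl nilpotent_one_minus_dvd_one[OF f(3)]] by simp
    ultimately show ?thesis
      by (rule dvd_trans)
  qed
  ultimately show "\<exists>e. e * e = e \<and> b dvd e * a \<and> a dvd (1 - e) * b"
    using f(1) by blast
qed

lemma idempotent_gcd:
  fixes e a b :: "'a::comm_ring_1"
  assumes e: "e * e = e" and "b dvd e * a" "a dvd (1 - e) * b"
  defines "g \<equiv> e * b + (1 - e) * a"
  shows "g dvd a" and "g dvd b"
proof -
  have eg: "e * g = e * b" and eg': "(1 - e) * g = (1 - e) * a"
    unfolding g_def using e by (simp_all add: algebra_simps)
  have e': "(1 - e) * (1 - e) = 1 - e"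
    using e by (simp add: algebra_simps)
  have "e * b dvd e * (e * a)"
    using \<open>b dvd e * a\<close> by (rule mult_dvd_mono[OF dvd_refl])
  then have "e * g dvd e * a"
    unfolding eg mult.assoc[symmetric] e .
  then have "g dvd e * a"
    by (rule dvd_trans[OF dvd_triv_right])
  moreover have "g dvd (1 - e) * a"
    using dvd_triv_right[of g "1 - e"] unfolding eg' .
  ultimately have "g dvd e * a + (1 - e) * a"
    by (rule dvd_add)
  then show "g dvd a"
    by (simp add: algebra_simps)
  have "(1 - e) * a dvd (1 - e) * ((1 - e) * b)"
    using \<open>a dvd (1 - e) * b\<close> by (rule mult_dvd_mono[OF dvd_refl])
  then have "(1 - e) * g dvd (1 - e) * b"
    unfolding eg' mult.assoc[symmetric] e' .
  then have "g dvd (1 - e) * b"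
    by (rule dvd_trans[OF dvd_triv_right])
  moreover have "g dvd e * b"
    using dvd_triv_right[of g e] unfolding eg .
  ultimately have "g dvd e * b + (1 - e) * b"
    by (blast intro: dvd_add)
  then show "g dvd b"
    by (simp add: algebra_simps)
qed

lemma finite_set_principal_generator:
  assumes C: "idempotent_comparable TYPE('a::comm_ring_1)" and "finite (S::'a set)"
  shows "\<exists>d. S \<subseteq> {r * d | r. True} \<and> (\<forall>I. ring_ideal I \<and> S \<subseteq> I \<longrightarrow> d \<in> I)"
  using \<open>finite S\<close>
proof (induction S rule: finite_induct)
  case empty
  show ?case
    using ring_idealD(1) by blast
next
  case (insert a S)
  then obtain d where d: "S \<subseteq> {r * d | r. True}" "\<forall>I. ring_ideal I \<and> S \<subseteq> I \<longrightarrow> d \<in> I"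
    by blast
  obtain e where e: "e * e = e" "d dvd e * a" "a dvd (1 - e) * d"
    using C unfolding idempotent_comparable_def by blast
  define g where "g = e * d + (1 - e) * a"
  have "g dvd a" "g dvd d"
    using idempotent_gcd[OF e] unfolding g_def by simp_all
  then obtain p q where "a = g * p" and "d = g * q"
    by (elim dvdE)
  then have p: "a = p * g" and q: "d = q * g"
    by (simp_all add: mult.commute)
  have "insert a S \<subseteq> {r * g | r. True}"
  proof
    fix x assume "x \<in> insert a S"
    then consider "x = a" | r where "x = r * d"
      using d(1) by blast
    then show "x \<in> {r * g | r. True}"
    proof cases
      case (2 r)
      then have "x = (r * q) * g"
        using q by (simp add: mult.assoc)
      then show ?thesis
        by blast
    qed (use p in blast)
  qed
  moreover have "g \<in> I" if "ring_ideal I" "insert a S \<subseteq> I" for I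
    using that d(2) ring_idealD[OF that(1)] unfolding g_def by simp
  ultimately show ?case
    by blast
qed

lemma ideal_generated_eq_principal:
  fixes d :: "'a::comm_ring_1"
  assumes "S \<subseteq> {r * d | r. True}" and "\<forall>I. ring_ideal I \<and> S \<subseteq> I \<longrightarrow> d \<in> I"
  shows "ideal_generated S = {r * d | r. True}"
proof
  have "ring_ideal {r * d | r. True}"
    unfolding ring_ideal_def
    by (auto simp: distrib_right mult.assoc intro: exI[of _ 0]) (metis distrib_right, metis mult.assoc)
  with assms(1) show "ideal_generated S \<subseteq> {r * d | r. True}"
    unfolding ideal_generated_def by blast
  show "{r * d | r. True} \<subseteq> ideal_generated S"
    unfolding ideal_generated_def using assms(2) ring_idealD(3) by blast
qed

lemma bezout_if_idempotent_comparable: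
  assumes "idempotent_comparable TYPE('a::comm_ring_1)"
  shows "bezout_ring TYPE('a)"
  unfolding bezout_ring_def
proof (intro allI impI)
  fix S :: "'a set"
  assume "finite S"
  then obtain d where "S \<subseteq> {r * d | r. True}" "\<forall>I. ring_ideal I \<and> S \<subseteq> I \<longrightarrow> d \<in> I"
    using finite_set_principal_generator[OF assms] by blast
  then show "\<exists>a. ideal_generated S = {r * a | r. True}"
    using ideal_generated_eq_principal by blast
qed

lemma comaximal_iff:
  fixes r b :: "'a::comm_ring_1"
  shows "{x * r + y * b | x y. True} = UNIV \<longleftrightarrow> (\<exists>x y. x * r + y * b = 1)"
proof
  assume "{x * r + y * b | x y. True} = UNIV"
  then have "1 \<in> {x * r + y * b | x y. True}"
    by simp
  then show "\<exists>x y. x * r + y * b = 1"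
    by (blast intro: sym)
next
  assume "\<exists>x y. x * r + y * b = 1"
  then obtain x y where "x * r + y * b = 1"
    by blast
  then have "z = (z * x) * r + (z * y) * b" for z
    by (metis distrib_left mult.assoc mult.right_neutral)
  then show "{x * r + y * b | x y. True} = UNIV"
    by blast
qed

text \<open>Splitting along \<open>f\<close>: on \<open>fR\<close> the element \<open>b\<close> is a unit and \<open>a\<close> goes into \<open>r\<close>; on
  \<open>(1 - f)R\<close> it is nilpotent and \<open>a\<close> goes into \<open>s\<close>.\<close>
lemma idempotent_adequate_factorization:
  fixes a b f :: "'a::comm_ring_1"
  assumes f: "f * f = f" "b dvd f" "((1 - f) * b) ^ n = 0"
  defines "r \<equiv> f * a + (1 - f)" and "s \<equiv> f + (1 - f) * a"
  shows "a = r * s" and "\<exists>x y. x * r + y * b = 1"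
    and "s' dvd s \<Longrightarrow> \<exists>x y. x * s' + y * b = 1 \<Longrightarrow> s' dvd 1"
proof -
  have f0: "f * (1 - f) = 0"
    using f(1) by (simp add: algebra_simps)
  show "a = r * s"
    unfolding r_def s_def using f(1) f0 by (simp add: algebra_simps)
  obtain w where w: "f = b * w"
    using f(2) by blast
  have "(1 - f) * r + w * b = 1"
    unfolding r_def using f(1) f0 w by (simp add: algebra_simps)
  then show "\<exists>x y. x * r + y * b = 1"
    by blast
  assume "s' dvd s" and "\<exists>x y. x * s' + y * b = 1"
  then obtain x y where xy: "x * s' + y * b = 1"
    by blast
  have "f * s = f"
    unfolding s_def using f(1) f0 by (simp add: algebra_simps)
  then have "s' dvd f"
    using \<open>s' dvd s\<close> by (metis dvd_mult mult.commute)
  then have "s' dvd f + (1 - f) * x * s'"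
    by simp
  also have "f + (1 - f) * x * s' = 1 - y * ((1 - f) * b)"
  proof -
    have "x * s' = 1 - y * b"
      using xy by (simp add: eq_diff_eq)
    then have "f + (1 - f) * x * s' = f + (1 - f) * (1 - y * b)"
      by (simp add: mult.assoc)
    then show ?thesis
      by (simp add: algebra_simps)
  qed
  also have "\<dots> dvd 1"
    using f(3) by (intro nilpotent_one_minus_dvd_one[of _ n]) (simp add: power_mult_distrib)
  finally show "s' dvd 1" .
qed

lemma adequate_if_bezout_strongly_pi_regular:
  assumes "bezout_ring TYPE('a::comm_ring_1)" and "strongly_pi_regular TYPE('a)"
  shows "adequate_ring TYPE('a)"
  unfolding adequate_ring_def
proof (intro conjI allI impI)
  fix a b :: 'a
  obtain k x where "b ^ k = b ^ Suc k * x"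
    using assms(2) unfolding strongly_pi_regular_def by blast
  then obtain f where "f * f = f" "b dvd f" "((1 - f) * b) ^ Suc k = 0"
    using pi_regular_idempotent by blast
  note split = idempotent_adequate_factorization[OF this, where a = a]
  show "\<exists>r s. a = r * s \<and> {x * r + y * b | x y. True} = UNIV \<and>
      (\<forall>s'. s' dvd s \<and> \<not> s' dvd 1 \<longrightarrow> {x * s' + y * b | x y. True} \<noteq> UNIV)"
    unfolding comaximal_iff using split by blast
qed (rule assms(1))

section \<open>Diagonalization over idempotent comparable rings\<close>

lemma invertible_matI:
  assumes "A \<in> carrier_mat n n" "B \<in> carrier_mat n n" "A * B = 1\<^sub>m n" "B * A = 1\<^sub>m n"
  shows "invertible_mat A"
  using assms unfolding invertible_mat_def inverts_mat_def by auto

lemma invertible_matE: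
  assumes "invertible_mat A" and A: "A \<in> carrier_mat n n"
  obtains B where "B \<in> carrier_mat n n" "A * B = 1\<^sub>m n" "B * A = 1\<^sub>m n"
proof -
  obtain B where AB: "A * B = 1\<^sub>m n" and BA: "B * A = 1\<^sub>m (dim_row B)"
    using assms unfolding invertible_mat_def inverts_mat_def by auto
  have "dim_col B = n"
    using arg_cong[OF AB, of dim_col] by simp
  moreover have "dim_row B = n"
    using arg_cong[OF BA, of dim_col] A by simp
  ultimately show thesis
    using that AB BA by auto
qed

lemma invertible_mat_mult:
  assumes A: "A \<in> carrier_mat n n" and B: "B \<in> carrier_mat n n"
    and "invertible_mat A" "invertible_mat B"
  shows "invertible_mat (A * B)"
proof -
  obtain A' where A': "A' \<in> carrier_mat n n" "A * A' = 1\<^sub>m n" "A' * A = 1\<^sub>m n"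
    using assms(3) A by (rule invertible_matE)
  obtain B' where B': "B' \<in> carrier_mat n n" "B * B' = 1\<^sub>m n" "B' * B = 1\<^sub>m n"
    using assms(4) B by (rule invertible_matE)
  have "A * B * (B' * A') = A * (B * B') * A'"
    using A B A'(1) B'(1) by (simp add: assoc_mult_mat[of _ n n _ n _ n])
  also have "\<dots> = 1\<^sub>m n"
    using A A' B'(2) by simp
  finally have right: "A * B * (B' * A') = 1\<^sub>m n" .
  have "B' * A' * (A * B) = B' * (A' * A) * B"
    using A B A'(1) B'(1) by (simp add: assoc_mult_mat[of _ n n _ n _ n])
  also have "\<dots> = 1\<^sub>m n"
    using B A'(3) B' by simp
  finally have left: "B' * A' * (A * B) = 1\<^sub>m n" .
  from right left show ?thesis
    using A B A'(1) B'(1) by (intro invertible_matI[of _ n "B' * A'"]) auto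
qed

lemma invertible_mat_one: "invertible_mat (1\<^sub>m n)"
  by (rule invertible_matI[of _ n "1\<^sub>m n"]) auto

lemma invertible_mat_det_one:
  assumes A: "A \<in> carrier_mat n n" and "det A = 1"
  shows "invertible_mat A"
proof -
  have "(1::'a) \<cdot>\<^sub>m 1\<^sub>m n = 1\<^sub>m n"
    by (rule eq_matI) auto
  then show ?thesis
    using adj_mat[OF A] \<open>det A = 1\<close> by (intro invertible_matI[OF A, of "adj_mat A"]) auto
qed

lemma invertible_swaprows_mat: "i < n \<Longrightarrow> j < n \<Longrightarrow> invertible_mat (swaprows_mat n i j)"
  using swaprows_mat_inv[of i n j] by (intro invertible_matI[of _ n "swaprows_mat n i j"]) auto

lemma index_mult_mat_sum:
  assumes "A \<in> carrier_mat a b" "B \<in> carrier_mat b c" "i < a" "j < c"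
  shows "(A * B) $$ (i, j) = (\<Sum>k<b. A $$ (i, k) * B $$ (k, j))"
  using assms by (simp add: scalar_prod_def atLeast0LessThan)

lemma idempotent_combination_mult:
  fixes e :: "'a::comm_ring_1"
  assumes e: "e * e = e"
    and X: "X1 \<in> carrier_mat a b" "X2 \<in> carrier_mat a b" and Y: "Y1 \<in> carrier_mat b c" "Y2 \<in> carrier_mat b c"
  shows "(e \<cdot>\<^sub>m X1 + (1 - e) \<cdot>\<^sub>m X2) * (e \<cdot>\<^sub>m Y1 + (1 - e) \<cdot>\<^sub>m Y2) = e \<cdot>\<^sub>m (X1 * Y1) + (1 - e) \<cdot>\<^sub>m (X2 * Y2)"
proof (rule eq_matI)
  have scalar: "(e * x1 + (1 - e) * x2) * (e * y1 + (1 - e) * y2) = e * (x1 * y1) + (1 - e) * (x2 * y2)"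
    for x1 x2 y1 y2 :: 'a
  proof -
    have "e * (1 - e) = 0" "(1 - e) * (1 - e) = 1 - e"
      using e by (simp_all add: algebra_simps)
    moreover have "(e * x1 + (1 - e) * x2) * (e * y1 + (1 - e) * y2) =
      (e * e) * (x1 * y1) + (e * (1 - e)) * (x1 * y2 + x2 * y1) + ((1 - e) * (1 - e)) * (x2 * y2)"
      by (simp add: algebra_simps)
    ultimately show ?thesis
      using e by simp
  qed
  fix i j assume "i < dim_row (e \<cdot>\<^sub>m (X1 * Y1) + (1 - e) \<cdot>\<^sub>m (X2 * Y2))"
    "j < dim_col (e \<cdot>\<^sub>m (X1 * Y1) + (1 - e) \<cdot>\<^sub>m (X2 * Y2))"
  then have i: "i < a" and j: "j < c"
    using X Y by auto
  have "((e \<cdot>\<^sub>m X1 + (1 - e) \<cdot>\<^sub>m X2) * (e \<cdot>\<^sub>m Y1 + (1 - e) \<cdot>\<^sub>m Y2)) $$ (i, j)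
     = (\<Sum>k<b. (e * X1 $$ (i, k) + (1 - e) * X2 $$ (i, k)) * (e * Y1 $$ (k, j) + (1 - e) * Y2 $$ (k, j)))"
    using X Y i j by (subst index_mult_mat_sum[of _ a b _ c]) auto
  also have "\<dots> = e * (X1 * Y1) $$ (i, j) + (1 - e) * (X2 * Y2) $$ (i, j)"
    unfolding scalar index_mult_mat_sum[OF X(1) Y(1) i j] index_mult_mat_sum[OF X(2) Y(2) i j]
    by (simp add: sum.distrib sum_distrib_left)
  finally show "((e \<cdot>\<^sub>m X1 + (1 - e) \<cdot>\<^sub>m X2) * (e \<cdot>\<^sub>m Y1 + (1 - e) \<cdot>\<^sub>m Y2)) $$ (i, j)
      = (e \<cdot>\<^sub>m (X1 * Y1) + (1 - e) \<cdot>\<^sub>m (X2 * Y2)) $$ (i, j)"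
    using X Y i j by simp
qed (use X Y in auto)

lemma idempotent_combination_same:
  fixes e :: "'a::comm_ring_1"
  assumes "A \<in> carrier_mat a b"
  shows "e \<cdot>\<^sub>m A + (1 - e) \<cdot>\<^sub>m A = A"
  by (rule eq_matI) (use assms in \<open>auto simp: algebra_simps\<close>)

text \<open>Matrices over \<open>eR \<times> (1 - e)R\<close> are pairs of matrices over the two factors.\<close>
lemma invertible_idempotent_combination:
  fixes e :: "'a::comm_ring_1"
  assumes e: "e * e = e" and P: "P \<in> carrier_mat n n" "invertible_mat P"
    and S: "S \<in> carrier_mat n n" "invertible_mat S"
  shows "invertible_mat (e \<cdot>\<^sub>m P + (1 - e) \<cdot>\<^sub>m S)"
proof -
  obtain P' where P': "P' \<in> carrier_mat n n" "P * P' = 1\<^sub>m n" "P' * P = 1\<^sub>m n"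
    using P(2,1) by (rule invertible_matE)
  obtain S' where S': "S' \<in> carrier_mat n n" "S * S' = 1\<^sub>m n" "S' * S = 1\<^sub>m n"
    using S(2,1) by (rule invertible_matE)
  show ?thesis
    using idempotent_combination_mult[OF e P(1) S(1) P'(1) S'(1)]
      idempotent_combination_mult[OF e P'(1) S'(1) P(1) S(1)]
      idempotent_combination_same[of "1\<^sub>m n" n n e] P S P' S'
    by (intro invertible_matI[of _ n "e \<cdot>\<^sub>m P' + (1 - e) \<cdot>\<^sub>m S'"]) auto
qed

definition dvd_entries :: "'a::comm_ring_1 \<Rightarrow> 'a mat \<Rightarrow> bool" where
  "dvd_entries d A \<longleftrightarrow> (\<forall>i<dim_row A. \<forall>j<dim_col A. d dvd A $$ (i, j))"

lemma dvd_entries_mult: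
  assumes A: "A \<in> carrier_mat a b" and B: "B \<in> carrier_mat b c"
  shows "dvd_entries d A \<Longrightarrow> dvd_entries d (A * B)" and "dvd_entries d B \<Longrightarrow> dvd_entries d (A * B)"
proof -
  have entry: "d dvd (A * B) $$ (i, j)"
    if "i < a" "j < c" and "\<forall>k<b. d dvd A $$ (i, k) * B $$ (k, j)" for i j
    unfolding index_mult_mat_sum[OF A B \<open>i < a\<close> \<open>j < c\<close>] using that(3) by (auto intro: dvd_sum)
  show "dvd_entries d A \<Longrightarrow> dvd_entries d (A * B)"
    using A B unfolding dvd_entries_def by (auto simp del: index_mult_mat(1) intro!: entry dvd_mult2)
  show "dvd_entries d B \<Longrightarrow> dvd_entries d (A * B)"
    using A B unfolding dvd_entries_def by (auto simp del: index_mult_mat(1) intro!: entry dvd_mult)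
qed

lemma swaprows_mult_swapcols_index:
  assumes A: "A \<in> carrier_mat m n" and "i < m" "j < n"
  shows "(swaprows_mat m 0 i * A * swaprows_mat n 0 j) $$ (0, 0) = A $$ (i, j)"
proof -
  have "swaprows_mat m 0 i * A = swaprows 0 i A"
    using swaprows_mat[OF A] assms by simp
  moreover have "swaprows 0 i A * swaprows_mat n 0 j = swapcols 0 j (swaprows 0 i A)"
    using swapcols_mat[of "swaprows 0 i A" m n 0 j] A assms by simp
  ultimately show ?thesis
    using assms by simp
qed

text \<open>With \<open>e\<close> splitting the current pivot \<open>d\<close> against the entry \<open>b\<close>, the transformation
  that acts as the old one on \<open>eR\<close> and as the permutation moving \<open>b\<close> to the corner on
  \<open>(1 - e)R\<close> has the pivot \<open>e d + (1 - e) b\<close>, which divides both.\<close>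
lemma pivot_step:
  assumes C: "idempotent_comparable TYPE('a::comm_ring_1)"
    and A: "(A::'a mat) \<in> carrier_mat m n" and ij: "i < m" "j < n"
    and P: "P \<in> carrier_mat m m" "invertible_mat P" and Q: "Q \<in> carrier_mat n n" "invertible_mat Q"
  obtains P' Q' where "P' \<in> carrier_mat m m" "Q' \<in> carrier_mat n n" "invertible_mat P'" "invertible_mat Q'"
    "(P' * A * Q') $$ (0, 0) dvd (P * A * Q) $$ (0, 0)" "(P' * A * Q') $$ (0, 0) dvd A $$ (i, j)"
proof -
  define d where "d = (P * A * Q) $$ (0, 0)"
  obtain e where e: "e * e = e" "d dvd e * A $$ (i, j)" "A $$ (i, j) dvd (1 - e) * d"
    using C unfolding idempotent_comparable_def by blast
  define S where "S = (swaprows_mat m 0 i :: 'a mat)"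
  define T where "T = (swaprows_mat n 0 j :: 'a mat)"
  have S: "S \<in> carrier_mat m m" "invertible_mat S" and T: "T \<in> carrier_mat n n" "invertible_mat T"
    unfolding S_def T_def using ij by (auto intro: invertible_swaprows_mat)
  define P' where "P' = e \<cdot>\<^sub>m P + (1 - e) \<cdot>\<^sub>m S"
  define Q' where "Q' = e \<cdot>\<^sub>m Q + (1 - e) \<cdot>\<^sub>m T"
  have "P' * A = e \<cdot>\<^sub>m (P * A) + (1 - e) \<cdot>\<^sub>m (S * A)"
    unfolding P'_def using idempotent_combination_mult[OF e(1) P(1) S(1) A A]
      idempotent_combination_same[OF A, of e] by simp
  then have "P' * A * Q' = e \<cdot>\<^sub>m (P * A * Q) + (1 - e) \<cdot>\<^sub>m (S * A * T)"
    unfolding Q'_def using idempotent_combination_mult[OF e(1) _ _ Q(1) T(1), of "P * A" m "S * A"]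
      P S A by simp
  then have "(P' * A * Q') $$ (0, 0) = e * d + (1 - e) * A $$ (i, j)"
    unfolding d_def S_def T_def using swaprows_mult_swapcols_index[OF A ij] P Q A ij by simp
  then have "(P' * A * Q') $$ (0, 0) dvd d" "(P' * A * Q') $$ (0, 0) dvd A $$ (i, j)"
    using idempotent_gcd[OF e] by simp_all
  moreover have "P' \<in> carrier_mat m m" "Q' \<in> carrier_mat n n" "invertible_mat P'" "invertible_mat Q'"
    unfolding P'_def Q'_def using P Q S T by (auto intro: invertible_idempotent_combination[OF e(1)])
  ultimately show thesis
    using that unfolding d_def by blast
qed

lemma pivot_dvd_entries:
  assumes C: "idempotent_comparable TYPE('a::comm_ring_1)" and A: "(A::'a mat) \<in> carrier_mat m n"
  obtains P Q where "P \<in> carrier_mat m m" "Q \<in> carrier_mat n n" "invertible_mat P" "invertible_mat Q"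
    "dvd_entries ((P * A * Q) $$ (0, 0)) A"
proof -
  have "\<exists>P Q. P \<in> carrier_mat m m \<and> Q \<in> carrier_mat n n \<and> invertible_mat P \<and> invertible_mat Q \<and>
      (\<forall>(i, j) \<in> T. (P * A * Q) $$ (0, 0) dvd A $$ (i, j))"
    if "finite T" "T \<subseteq> {..<m} \<times> {..<n}" for T
    using that
  proof (induction T rule: finite_induct)
    case empty
    show ?case
      by (intro exI[of _ "1\<^sub>m m"] exI[of _ "1\<^sub>m n"]) (auto intro: invertible_mat_one)
  next
    case (insert t T)
    then obtain P Q where P: "P \<in> carrier_mat m m" "invertible_mat P" and Q: "Q \<in> carrier_mat n n" "invertible_mat Q"
      and dvd_T: "\<forall>(i, j) \<in> T. (P * A * Q) $$ (0, 0) dvd A $$ (i, j)"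
      by auto
    obtain i j where t: "t = (i, j)" and ij: "i < m" "j < n"
      using insert(4) by auto
    obtain P' Q' where P'Q': "P' \<in> carrier_mat m m" "Q' \<in> carrier_mat n n" "invertible_mat P'" "invertible_mat Q'"
      and dvd_old: "(P' * A * Q') $$ (0, 0) dvd (P * A * Q) $$ (0, 0)"
      and dvd_new: "(P' * A * Q') $$ (0, 0) dvd A $$ (i, j)"
      using pivot_step[OF C A ij P Q] .
    have "\<forall>(i, j) \<in> T. (P' * A * Q') $$ (0, 0) dvd A $$ (i, j)"
      using dvd_T dvd_trans[OF dvd_old] by blast
    with dvd_new t P'Q' show ?case
      by blast
  qed
  from this[of "{..<m} \<times> {..<n}"] obtain P Q where "P \<in> carrier_mat m m" "Q \<in> carrier_mat n n"
    "invertible_mat P" "invertible_mat Q" "\<forall>(i, j) \<in> {..<m} \<times> {..<n}. (P * A * Q) $$ (0, 0) dvd A $$ (i, j)"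
    by auto
  then show thesis
    using that A unfolding dvd_entries_def by auto
qed

definition row_elim_mat :: "nat \<Rightarrow> (nat \<Rightarrow> 'a::comm_ring_1) \<Rightarrow> 'a mat" where
  "row_elim_mat n c = mat n n (\<lambda>(i, k). (if i = k then 1 else 0) - (if k = 0 \<and> i \<noteq> 0 then c i else 0))"

lemma row_elim_mat_carrier [simp]: "row_elim_mat n c \<in> carrier_mat n n"
  and row_elim_mat_dim [simp]: "dim_row (row_elim_mat n c) = n" "dim_col (row_elim_mat n c) = n"
  unfolding row_elim_mat_def by simp_all

lemma det_row_elim_mat: "det (row_elim_mat n c) = 1"
proof -
  have "det (row_elim_mat n c) = prod_list (diag_mat (row_elim_mat n c))"
    by (rule det_lower_triangular[OF _ row_elim_mat_carrier]) (auto simp: row_elim_mat_def)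
  also have "\<dots> = 1"
    unfolding prod_list_diag_prod by (intro prod.neutral) (auto simp: row_elim_mat_def)
  finally show ?thesis .
qed

lemma row_elim_mat_mult_index:
  assumes B: "B \<in> carrier_mat n nc" and "i < n" "j < nc"
  shows "(row_elim_mat n c * B) $$ (i, j) = B $$ (i, j) - (if i = 0 then 0 else c i * B $$ (0, j))"
proof -
  have "(row_elim_mat n c * B) $$ (i, j)
      = (\<Sum>k<n. (if i = k then B $$ (k, j) else 0) - (if k = 0 \<and> i \<noteq> 0 then c i * B $$ (k, j) else 0))"
    using assms by (subst index_mult_mat_sum[OF row_elim_mat_carrier B]) (auto simp: row_elim_mat_def
      left_diff_distrib intro!: sum.cong)
  also have "\<dots> = B $$ (i, j) - (if i = 0 then 0 else c i * B $$ (0, j))"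
    using assms by (simp add: sum_subtractf)
  finally show ?thesis .
qed

lemma mult_transpose_row_elim_mat_index:
  assumes A: "A \<in> carrier_mat nr n" and "i < nr" "j < n"
  shows "(A * transpose_mat (row_elim_mat n c)) $$ (i, j) = A $$ (i, j) - (if j = 0 then 0 else c j * A $$ (i, 0))"
proof -
  have "A * transpose_mat (row_elim_mat n c) = transpose_mat (row_elim_mat n c * transpose_mat A)"
    using A by (subst transpose_mult[of _ n n _ nr]) auto
  then have "(A * transpose_mat (row_elim_mat n c)) $$ (i, j) = (row_elim_mat n c * transpose_mat A) $$ (j, i)"
    using assms by simp
  then show ?thesis
    using assms row_elim_mat_mult_index[of "transpose_mat A" n nr j i c] by simp
qed

lemma four_block_corner_split:
  assumes C: "C \<in> carrier_mat (Suc m) (Suc n)"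
    and "\<forall>i. 0 < i \<and> i < Suc m \<longrightarrow> C $$ (i, 0) = 0" "\<forall>j. 0 < j \<and> j < Suc n \<longrightarrow> C $$ (0, j) = 0"
  shows "C = four_block_mat (mat 1 1 (\<lambda>_. C $$ (0, 0))) (0\<^sub>m 1 n) (0\<^sub>m m 1) (mat m n (\<lambda>(i, j). C $$ (Suc i, Suc j)))"
proof (rule eq_matI)
  fix i j
  assume "i < dim_row (four_block_mat (mat 1 1 (\<lambda>_. C $$ (0, 0))) (0\<^sub>m 1 n) (0\<^sub>m m 1) (mat m n (\<lambda>(i, j). C $$ (Suc i, Suc j))))"
    "j < dim_col (four_block_mat (mat 1 1 (\<lambda>_. C $$ (0, 0))) (0\<^sub>m 1 n) (0\<^sub>m m 1) (mat m n (\<lambda>(i, j). C $$ (Suc i, Suc j))))"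
  then show "C $$ (i, j) = four_block_mat (mat 1 1 (\<lambda>_. C $$ (0, 0))) (0\<^sub>m 1 n) (0\<^sub>m m 1) (mat m n (\<lambda>(i, j). C $$ (Suc i, Suc j))) $$ (i, j)"
    using assms(2,3) by (cases i; cases j) auto
qed (use C in auto)

lemma clear_pivot_row_col:
  assumes B: "B \<in> carrier_mat (Suc m) (Suc n)" and dvd: "dvd_entries (B $$ (0, 0)) B"
  obtains L U C where "L \<in> carrier_mat (Suc m) (Suc m)" "U \<in> carrier_mat (Suc n) (Suc n)"
    "invertible_mat L" "invertible_mat U" "C \<in> carrier_mat m n"
    "L * B * U = four_block_mat (mat 1 1 (\<lambda>_. B $$ (0, 0))) (0\<^sub>m 1 n) (0\<^sub>m m 1) C"
proof -
  define d where "d = B $$ (0, 0)"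
  define c where "c i = (SOME k. B $$ (i, 0) = d * k)" for i
  define c' where "c' j = (SOME k. B $$ (0, j) = d * k)" for j
  have c: "B $$ (i, 0) = d * c i" if "i < Suc m" for i
  proof -
    have "d dvd B $$ (i, 0)"
      using dvd that B unfolding dvd_entries_def d_def by auto
    then show ?thesis
      unfolding c_def dvd_def by (rule someI_ex)
  qed
  have c': "B $$ (0, j) = d * c' j" if "j < Suc n" for j
  proof -
    have "d dvd B $$ (0, j)"
      using dvd that B unfolding dvd_entries_def d_def by auto
    then show ?thesis
      unfolding c'_def dvd_def by (rule someI_ex)
  qed
  define L where "L = row_elim_mat (Suc m) c"
  define U where "U = transpose_mat (row_elim_mat (Suc n) c')"
  have L: "L \<in> carrier_mat (Suc m) (Suc m)" and U: "U \<in> carrier_mat (Suc n) (Suc n)"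
    unfolding L_def U_def by auto
  have LB: "(L * B) $$ (i, j) = B $$ (i, j) - (if i = 0 then 0 else c i * B $$ (0, j))"
    if "i < Suc m" "j < Suc n" for i j
    unfolding L_def using row_elim_mat_mult_index[OF B that] .
  have LBU: "(L * B * U) $$ (i, j) = (L * B) $$ (i, j) - (if j = 0 then 0 else c' j * (L * B) $$ (i, 0))"
    if "i < Suc m" "j < Suc n" for i j
    unfolding U_def using mult_transpose_row_elim_mat_index[of "L * B" "Suc m" "Suc n" i j c'] L B that by simp
  define C where "C = L * B * U"
  have "C = four_block_mat (mat 1 1 (\<lambda>_. C $$ (0, 0))) (0\<^sub>m 1 n) (0\<^sub>m m 1) (mat m n (\<lambda>(i, j). C $$ (Suc i, Suc j)))"
  proof (rule four_block_corner_split)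
    show "C \<in> carrier_mat (Suc m) (Suc n)"
      unfolding C_def using L B U by simp
    show "\<forall>i. 0 < i \<and> i < Suc m \<longrightarrow> C $$ (i, 0) = 0"
    proof (intro allI impI)
      fix i assume i: "0 < i \<and> i < Suc m"
      then have "C $$ (i, 0) = B $$ (i, 0) - c i * d"
        unfolding C_def d_def using LBU LB by simp
      then show "C $$ (i, 0) = 0"
        using c[of i] i by (simp add: mult.commute)
    qed
    show "\<forall>j. 0 < j \<and> j < Suc n \<longrightarrow> C $$ (0, j) = 0"
    proof (intro allI impI)
      fix j assume j: "0 < j \<and> j < Suc n"
      then have "C $$ (0, j) = B $$ (0, j) - c' j * d"
        unfolding C_def d_def using LBU LB by simp
      then show "C $$ (0, j) = 0"
        using c'[of j] j by (simp add: mult.commute)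
    qed
  qed
  moreover have "C $$ (0, 0) = B $$ (0, 0)"
    unfolding C_def using LBU LB by simp
  ultimately have split: "L * B * U = four_block_mat (mat 1 1 (\<lambda>_. B $$ (0, 0))) (0\<^sub>m 1 n) (0\<^sub>m m 1)
      (mat m n (\<lambda>(i, j). C $$ (Suc i, Suc j)))"
    unfolding C_def by metis
  have "invertible_mat L" "invertible_mat U"
    unfolding L_def U_def
    by (auto intro!: invertible_mat_det_one simp: det_transpose[OF row_elim_mat_carrier] det_row_elim_mat)
  from that[OF L U this _ split] show thesis
    by simp
qed

lemma diagonal_rect_degenerate: "A \<in> carrier_mat m n \<Longrightarrow> m = 0 \<or> n = 0 \<Longrightarrow> diagonal_rect A"
  unfolding diagonal_rect_def by auto

lemma diagonal_rect_four_block_corner: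
  assumes D: "D \<in> carrier_mat m n" "diagonal_rect D"
  shows "diagonal_rect (four_block_mat (mat 1 1 (\<lambda>_. d)) (0\<^sub>m 1 n) (0\<^sub>m m 1) D)"
  unfolding diagonal_rect_def
proof (intro allI impI)
  fix i j
  assume "i < dim_row (four_block_mat (mat 1 1 (\<lambda>_. d)) (0\<^sub>m 1 n) (0\<^sub>m m 1) D)"
    "j < dim_col (four_block_mat (mat 1 1 (\<lambda>_. d)) (0\<^sub>m 1 n) (0\<^sub>m m 1) D)" "i \<noteq> j"
  then show "four_block_mat (mat 1 1 (\<lambda>_. d)) (0\<^sub>m 1 n) (0\<^sub>m m 1) D $$ (i, j) = 0"
    using D unfolding diagonal_rect_def by (cases i; cases j) auto
qed

lemma four_block_corner_mult:
  fixes d :: "'a::comm_ring_1"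
  assumes P: "P \<in> carrier_mat m m" and C: "C \<in> carrier_mat m n" and Q: "Q \<in> carrier_mat n n"
  shows "four_block_mat (1\<^sub>m 1) (0\<^sub>m 1 m) (0\<^sub>m m 1) P * four_block_mat (mat 1 1 (\<lambda>_. d)) (0\<^sub>m 1 n) (0\<^sub>m m 1) C
      * four_block_mat (1\<^sub>m 1) (0\<^sub>m 1 n) (0\<^sub>m n 1) Q
    = four_block_mat (mat 1 1 (\<lambda>_. d)) (0\<^sub>m 1 n) (0\<^sub>m m 1) (P * C * Q)"
proof -
  have "four_block_mat (1\<^sub>m 1) (0\<^sub>m 1 m) (0\<^sub>m m 1) P * four_block_mat (mat 1 1 (\<lambda>_. d)) (0\<^sub>m 1 n) (0\<^sub>m m 1) C
      = four_block_mat (mat 1 1 (\<lambda>_. d)) (0\<^sub>m 1 n) (0\<^sub>m m 1) (P * C)"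
    using P C by (subst mult_four_block_mat[of _ 1 1 _ m _ m _ _ 1 _ n]) auto
  moreover have "four_block_mat (mat 1 1 (\<lambda>_. d)) (0\<^sub>m 1 n) (0\<^sub>m m 1) (P * C)
      * four_block_mat (1\<^sub>m 1) (0\<^sub>m 1 n) (0\<^sub>m n 1) Q
    = four_block_mat (mat 1 1 (\<lambda>_. d)) (0\<^sub>m 1 n) (0\<^sub>m m 1) (P * C * Q)"
    using P C Q by (subst mult_four_block_mat[of _ 1 1 _ n _ m _ _ 1 _ n]) auto
  ultimately show ?thesis
    by simp
qed

lemma invertible_four_block_one:
  assumes P: "P \<in> carrier_mat m m" "invertible_mat P"
  shows "invertible_mat (four_block_mat (1\<^sub>m 1) (0\<^sub>m 1 m) (0\<^sub>m m 1) P)"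
proof -
  obtain P' where P': "P' \<in> carrier_mat m m" "P * P' = 1\<^sub>m m" "P' * P = 1\<^sub>m m"
    using P(2,1) by (rule invertible_matE)
  have "four_block_mat (1\<^sub>m 1) (0\<^sub>m 1 m) (0\<^sub>m m 1) P * four_block_mat (1\<^sub>m 1) (0\<^sub>m 1 m) (0\<^sub>m m 1) P'
      = 1\<^sub>m (Suc m)"
    using P P' by (subst mult_four_block_mat[of _ 1 1 _ m _ m _ _ 1 _ m]) auto
  moreover have "four_block_mat (1\<^sub>m 1) (0\<^sub>m 1 m) (0\<^sub>m m 1) P' * four_block_mat (1\<^sub>m 1) (0\<^sub>m 1 m) (0\<^sub>m m 1) P
      = 1\<^sub>m (Suc m)"
    using P P' by (subst mult_four_block_mat[of _ 1 1 _ m _ m _ _ 1 _ m]) auto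
  ultimately show ?thesis
    using P P' by (intro invertible_matI[of _ "Suc m" "four_block_mat (1\<^sub>m 1) (0\<^sub>m 1 m) (0\<^sub>m m 1) P'"])
      (auto intro: four_block_carrier_mat[of _ 1 1 _ m m, simplified])
qed

lemma assoc_mult_mat_sandwich:
  assumes "X1 \<in> carrier_mat m m" "X2 \<in> carrier_mat m m" "X3 \<in> carrier_mat m m" "A \<in> carrier_mat m n"
    "Y1 \<in> carrier_mat n n" "Y2 \<in> carrier_mat n n" "Y3 \<in> carrier_mat n n"
  shows "X1 * X2 * X3 * A * (Y1 * Y2 * Y3) = X1 * (X2 * (X3 * A * Y1) * Y2) * Y3"
  using assms
  by (simp add: assoc_mult_mat[of _ m m _ m _ m] assoc_mult_mat[of _ m m _ m _ n]
    assoc_mult_mat[of _ m m _ n _ n] assoc_mult_mat[of _ m n _ n _ n] assoc_mult_mat[of _ n n _ n _ n])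

lemma kaplansky_if_idempotent_comparable:
  assumes C: "idempotent_comparable TYPE('a::comm_ring_1)"
  shows "kaplansky_ring TYPE('a)"
  unfolding kaplansky_ring_def
proof (intro allI impI)
  fix m n and A :: "'a mat"
  assume "A \<in> carrier_mat m n"
  then show "\<exists>P Q D. P \<in> carrier_mat m m \<and> Q \<in> carrier_mat n n \<and> invertible_mat P \<and> invertible_mat Q
      \<and> D \<in> carrier_mat m n \<and> diagonal_rect D \<and> P * A * Q = D"
  proof (induction m arbitrary: n A)
    case 0
    then show ?case
      using diagonal_rect_degenerate invertible_mat_one
      by (intro exI[of _ "1\<^sub>m 0"] exI[of _ "1\<^sub>m n"] exI[of _ A]) auto
  next
    case (Suc m)
    show ?case
    proof (cases n)
      case 0
      then show ?thesis
        using Suc.prems diagonal_rect_degenerate invertible_mat_one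
        by (intro exI[of _ "1\<^sub>m (Suc m)"] exI[of _ "1\<^sub>m n"] exI[of _ A]) auto
    next
      case (Suc n')
      have A: "A \<in> carrier_mat (Suc m) (Suc n')"
        using Suc.prems \<open>n = Suc n'\<close> by simp
      obtain P1 Q1 where P1: "P1 \<in> carrier_mat (Suc m) (Suc m)" and Q1: "Q1 \<in> carrier_mat (Suc n') (Suc n')"
        and inv1: "invertible_mat P1" "invertible_mat Q1" and pivot: "dvd_entries ((P1 * A * Q1) $$ (0, 0)) A"
        using pivot_dvd_entries[OF C A] .
      define B where "B = P1 * A * Q1"
      have B: "B \<in> carrier_mat (Suc m) (Suc n')"
        unfolding B_def using P1 A Q1 by simp
      have "P1 * A \<in> carrier_mat (Suc m) (Suc n')"
        using P1 A by simp
      then have "dvd_entries (B $$ (0, 0)) B"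
        unfolding B_def by (rule dvd_entries_mult(1)[OF _ Q1 dvd_entries_mult(2)[OF P1 A pivot]])
      then obtain L U D1 where L: "L \<in> carrier_mat (Suc m) (Suc m)" and U: "U \<in> carrier_mat (Suc n') (Suc n')"
        and inv2: "invertible_mat L" "invertible_mat U" and D1: "D1 \<in> carrier_mat m n'"
        and cleared: "L * B * U = four_block_mat (mat 1 1 (\<lambda>_. B $$ (0, 0))) (0\<^sub>m 1 n') (0\<^sub>m m 1) D1"
        using clear_pivot_row_col[OF B] by blast
      obtain P2 Q2 D2 where P2: "P2 \<in> carrier_mat m m" and Q2: "Q2 \<in> carrier_mat n' n'"
        and inv3: "invertible_mat P2" "invertible_mat Q2" and D2: "D2 \<in> carrier_mat m n'" "diagonal_rect D2"
        and diag: "P2 * D1 * Q2 = D2"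
        using Suc.IH[OF D1] by blast
      define P3 where "P3 = four_block_mat (1\<^sub>m 1) (0\<^sub>m 1 m) (0\<^sub>m m 1) P2"
      define Q3 where "Q3 = four_block_mat (1\<^sub>m 1) (0\<^sub>m 1 n') (0\<^sub>m n' 1) Q2"
      have P3: "P3 \<in> carrier_mat (Suc m) (Suc m)" "invertible_mat P3"
        and Q3: "Q3 \<in> carrier_mat (Suc n') (Suc n')" "invertible_mat Q3"
        unfolding P3_def Q3_def
        using P2 Q2 invertible_four_block_one[OF P2 inv3(1)] invertible_four_block_one[OF Q2 inv3(2)] by auto
      define D where "D = four_block_mat (mat 1 1 (\<lambda>_. B $$ (0, 0))) (0\<^sub>m 1 n') (0\<^sub>m m 1) D2"
      have "P3 * L * P1 * A * (Q1 * U * Q3) = P3 * (L * B * U) * Q3"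
        unfolding B_def using P3 L P1 A Q1 U Q3 by (intro assoc_mult_mat_sandwich) auto
      also have "\<dots> = D"
        unfolding cleared P3_def Q3_def D_def four_block_corner_mult[OF P2 D1 Q2] diag ..
      finally have "P3 * L * P1 * A * (Q1 * U * Q3) = D" .
      moreover have "D \<in> carrier_mat (Suc m) n" "diagonal_rect D"
        unfolding D_def using D2 diagonal_rect_four_block_corner[OF D2] \<open>n = Suc n'\<close> by auto
      moreover have "invertible_mat (P3 * L * P1)"
        using P3 L P1 inv1 inv2 by (auto intro!: invertible_mat_mult[of _ "Suc m"])
      moreover have "invertible_mat (Q1 * U * Q3)"
        using Q3 U Q1 inv1 inv2 by (auto intro!: invertible_mat_mult[of _ "Suc n'"])
      moreover have "P3 * L * P1 \<in> carrier_mat (Suc m) (Suc m)" "Q1 * U * Q3 \<in> carrier_mat n n"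
        using P3 L P1 Q3 U Q1 \<open>n = Suc n'\<close> by auto
      ultimately show ?thesis
        by blast
    qed
  qed
qed

theorem theorem3p6:
  assumes "arithmetic_ring TYPE('a::comm_ring_1)"
    and "krull_dim_zero TYPE('a)"
  shows "kaplansky_ring TYPE('a) \<and> adequate_ring TYPE('a)"
proof -
  have zero_dim: "\<forall>P::'a set. prime_ideal P \<longrightarrow> maximal_ideal P"
    using assms(2) unfolding krull_dim_zero_def by blast
  have comparable: "idempotent_comparable TYPE('a)"
    using idempotent_comparable_if_arithmetic_zero_dim[OF assms(1) zero_dim] .
  have "adequate_ring TYPE('a)"
    using adequate_if_bezout_strongly_pi_regular bezout_if_idempotent_comparable[OF comparable]
      zero_dim_imp_strongly_pi_regular[OF zero_dim] by blast
  with kaplansky_if_idempotent_comparable[OF comparable] show ?thesis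
    by blast
qed

end
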